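(* Let $g:[0,1)\to\mathbb{R}$ be the function defined in the context, and let $g'(0)$ denote its right derivative at $0$. If $C'(0)<Py_H-Py_L$, then $g'(0)>0$ (and consequently every maximizer $a^*$ of $g$ on $[0,1)$ satisfies $a^*>0$). Further, if $0\le\beta\le u$, then $g'(0)>0$ holds only if $C'(0)<Py_H-Py_L$.
   Context: Fix $P>0$, $y_H>y_L\ge 0$, a real number $u$ and $\gamma\in(0,1]$. Let $C:[0,1)\to\mathbb{R}$ satisfy $C(0)=0$, $C$ increasing, strictly convex, twice differentiable, $C(a)\to\infty$ as $a\to1$. Let $\eta:[0,\infty)\to\mathbb{R}$ be strictly convex, increasing, twice differentiable with $\eta(0)=0$, and let $\beta\ge0$ satisfy $\gamma\eta'(\beta)=1$ (assumed to exist). For $a\in[0,1)$ define $w_L^*(a)=\max\{0,u-aC'(a)+C(a)\}$, $w_H^*(a)=w_L^*(a)+C'(a)$, $b_i^*(a)=\min\{\beta,w_i^*(a)\}$ for $i\in\{H,L\}$, and $g(a)=a\,(Py_H-w_H^*(a)+b_H^*(a)-\gamma\eta(b_H^*(a)))+(1-a)\,(Py_L-w_L^*(a)+b_L^*(a)-\gamma\eta(b_L^*(a)))$. (These are the optimal wages and thefts inducing effort $a$ in the one-shot wage-theft principal–agent problem, and $g(a)$ is the employer's resulting profit.) *)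

theory Defs
  imports "HOL-Analysis.Analysis"
begin

definition strict_convex_on :: "real set \<Rightarrow> (real \<Rightarrow> real) \<Rightarrow> bool" where
  "strict_convex_on S f \<longleftrightarrow>
     (\<forall>x\<in>S. \<forall>y\<in>S. \<forall>t. x \<noteq> y \<and> 0 < t \<and> t < 1 \<longrightarrow>
        f ((1 - t) * x + t * y) < (1 - t) * f x + t * f y)"

text \<open>Optimal low wage; Cd is the derivative C' of the cost C.\<close>
definition wL_star :: "(real \<Rightarrow> real) \<Rightarrow> (real \<Rightarrow> real) \<Rightarrow> real \<Rightarrow> real \<Rightarrow> real" where
  "wL_star C Cd u a = max 0 (u - a * Cd a + C a)"

definition wH_star :: "(real \<Rightarrow> real) \<Rightarrow> (real \<Rightarrow> real) \<Rightarrow> real \<Rightarrow> real \<Rightarrow> real" where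
  "wH_star C Cd u a = wL_star C Cd u a + Cd a"

definition profit ::
  "real \<Rightarrow> real \<Rightarrow> real \<Rightarrow> real \<Rightarrow> real \<Rightarrow> real \<Rightarrow> (real \<Rightarrow> real) \<Rightarrow> (real \<Rightarrow> real)
     \<Rightarrow> (real \<Rightarrow> real) \<Rightarrow> real \<Rightarrow> real" where
  "profit P yH yL u \<gamma> \<beta> C Cd \<eta> a =
     (let wL = wL_star C Cd u a; wH = wH_star C Cd u a;
          bL = min \<beta> wL; bH = min \<beta> wH
      in a * (P * yH - wH + bH - \<gamma> * \<eta> bH) + (1 - a) * (P * yL - wL + bL - \<gamma> * \<eta> bL))"

end

theory Submission
  imports Defs
begin

(* Write \<psi>(w) = w - b + \<gamma> \<eta>(b), b = min \<beta> w, for the employer's cost of the wage w net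
   of the optimal theft; then g(a) = P y_L + a (P y_H - P y_L) - a \<psi>(w_H a) - (1 - a) \<psi>(w_L a).
   Since \<gamma> \<eta>' \<le> \<gamma> \<eta>'(\<beta>) = 1 on [0, \<beta>], \<psi> is monotone and 1-Lipschitz.  The low wage
   moves only by C a - a C'(a) = o(a), so \<psi>(w_L a) has right derivative 0 at 0, and
   g'(0) = P (y_H - y_L) - (\<psi>(w_H 0) - \<psi>(w_L 0)) \<ge> P (y_H - y_L) - C'(0), because
   w_H - w_L = C'.  If \<beta> \<le> u, both wages at 0 lie above \<beta>, where \<psi> has slope 1, so
   equality holds. *)

lemma strict_convex_on_imp_convex_on:
  fixes f :: "real \<Rightarrow> real"
  assumes "strict_convex_on S f" "convex S"
  shows "convex_on S f"
proof (rule convex_onI)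
  fix t x y :: real
  assume "0 < t" "t < 1" "x \<in> S" "y \<in> S"
  then show "f ((1 - t) *\<^sub>R x + t *\<^sub>R y) \<le> (1 - t) * f x + t * f y"
  proof (cases "x = y")
    case False
    with assms \<open>0 < t\<close> \<open>t < 1\<close> \<open>x \<in> S\<close> \<open>y \<in> S\<close>
    have "f ((1 - t) * x + t * y) < (1 - t) * f x + t * f y"
      unfolding strict_convex_on_def by blast
    then show ?thesis by simp
  qed (simp add: algebra_simps)
qed (fact assms(2))

lemma at_within_Ico_at_right:
  fixes a b :: real
  assumes "a < b"
  shows "at a within {a..<b} = at_right a"
  by (rule at_within_nhd[of _ "{..<b}"]) (use assms in auto)

lemma mono_on_has_real_derivative_nonneg:
  fixes f :: "real \<Rightarrow> real"
  assumes mono: "mono_on {a..<b} f" and x: "x \<in> {a..<b}"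
    and deriv: "(f has_real_derivative d) (at x within {a..<b})"
  shows "0 \<le> d"
proof -
  have "(f has_real_derivative d) (at_right x)"
    using has_field_derivative_subset[OF deriv, of "{x..<b}"] x
    by (auto simp: at_within_Ico_at_right)
  then have "((\<lambda>y. (f y - f x) / (y - x)) \<longlongrightarrow> d) (at_right x)"
    by (simp add: has_field_derivative_iff)
  moreover have "\<forall>\<^sub>F y in at_right x. 0 \<le> (f y - f x) / (y - x)"
    unfolding eventually_at_right_field
  proof (intro exI[of _ b] conjI allI impI)
    fix y assume "x < y" "y < b"
    then show "0 \<le> (f y - f x) / (y - x)"
      using x mono_onD[OF mono, of x y] by simp
  qed (use x in simp)
  ultimately show ?thesis
    by (rule tendsto_lowerbound) (simp add: trivial_limit_at_right_real)
qed

lemma convex_on_diff_le_deriv_mult: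
  fixes f :: "real \<Rightarrow> real"
  assumes conv: "convex_on {a..} f"
    and deriv: "(f has_real_derivative f') (at c within {a..})"
    and pq: "a \<le> p" "p < q" "q \<le> c"
  shows "f q - f p \<le> f' * (q - p)"
proof -
  have "c \<in> interior {a..}" using pq by simp
  then have "f' * (p - c) \<le> f p - f c"
    using convex_on_imp_above_tangent[OF conv connected_Ici _ _ deriv] pq by simp
  then have tangent: "(f c - f p) / (c - p) \<le> f'"
    using pq by (simp add: divide_le_eq algebra_simps)
  have "(f q - f p) / (q - p) \<le> (f c - f p) / (c - p)"
  proof (cases "q = c")
    case False
    with pq have "(f p - f q) / (p - q) \<le> (f p - f c) / (p - c)"
      using convex_on_slope_le(1)[OF conv, of p c q] by simp
    moreover have "(f p - f q) / (p - q) = (f q - f p) / (q - p)"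
      and "(f p - f c) / (p - c) = (f c - f p) / (c - p)"
      by (metis minus_diff_eq minus_divide_divide)+
    ultimately show ?thesis by simp
  qed simp
  with tangent have "(f q - f p) / (q - p) \<le> f'" by linarith
  then show ?thesis using pq by (simp add: divide_le_eq)
qed

definition net_wage_cost :: "real \<Rightarrow> real \<Rightarrow> (real \<Rightarrow> real) \<Rightarrow> real \<Rightarrow> real" where
  "net_wage_cost \<beta> \<gamma> \<eta> w = w - min \<beta> w + \<gamma> * \<eta> (min \<beta> w)"

lemma profit_eq_net_wage_cost:
  "profit P yH yL u \<gamma> \<beta> C Cd \<eta> a =
     P * yL + a * (P * yH - P * yL) - a * net_wage_cost \<beta> \<gamma> \<eta> (wH_star C Cd u a)
       - (1 - a) * net_wage_cost \<beta> \<gamma> \<eta> (wL_star C Cd u a)"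
  by (simp add: profit_def net_wage_cost_def Let_def algebra_simps)

lemma net_wage_cost_lipschitz:
  assumes \<gamma>: "0 < \<gamma>" and \<eta>mono: "mono_on {0..} \<eta>" and \<eta>conv: "convex_on {0..} \<eta>"
    and \<eta>d: "(\<eta> has_real_derivative \<eta>') (at \<beta> within {0..})"
    and \<beta>: "0 \<le> \<beta>" "\<gamma> * \<eta>' = 1"
  shows "1-lipschitz_on {0..} (net_wage_cost \<beta> \<gamma> \<eta>)"
proof -
  have theft: "0 \<le> \<gamma> * (\<eta> q - \<eta> p) \<and> \<gamma> * (\<eta> q - \<eta> p) \<le> q - p"
    if "0 \<le> p" "p \<le> q" "q \<le> \<beta>" for p q
  proof (cases "p = q")
    case False
    have "\<eta> q - \<eta> p \<le> \<eta>' * (q - p)"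
      using convex_on_diff_le_deriv_mult[OF \<eta>conv \<eta>d] that False by simp
    then have "\<gamma> * (\<eta> q - \<eta> p) \<le> q - p"
      using mult_left_mono[of _ _ \<gamma>] \<gamma> \<beta>(2) by (fastforce simp: mult.assoc[symmetric])
    moreover have "\<eta> p \<le> \<eta> q" using mono_onD[OF \<eta>mono] that by simp
    ultimately show ?thesis using \<gamma> by simp
  qed simp
  have ordered: "\<bar>net_wage_cost \<beta> \<gamma> \<eta> y - net_wage_cost \<beta> \<gamma> \<eta> x\<bar> \<le> y - x"
    if "0 \<le> x" "x \<le> y" for x y
    using theft[of "min \<beta> x" "min \<beta> y"] that \<beta>(1)
    by (auto simp: net_wage_cost_def min_def right_diff_distrib abs_le_iff)
  show ?thesis
  proof (rule lipschitz_onI)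
    fix x y :: real assume "x \<in> {0..}" "y \<in> {0..}"
    then show "dist (net_wage_cost \<beta> \<gamma> \<eta> x) (net_wage_cost \<beta> \<gamma> \<eta> y) \<le> 1 * dist x y"
      using ordered[of x y] ordered[of y x]
      by (cases "x \<le> y") (auto simp: dist_real_def abs_minus_commute)
  qed simp
qed

lemma wL_star_dist_le:
  assumes "C 0 = 0"
  shows "\<bar>wL_star C Cd u a - wL_star C Cd u 0\<bar> \<le> \<bar>C a - a * Cd a\<bar>"
  using assms by (simp add: wL_star_def max_def)

lemma has_real_derivative_times_diff_ident:
  fixes k :: "real \<Rightarrow> real"
  assumes "continuous (at x within S) k"
  shows "((\<lambda>y. (y - x) * k y) has_real_derivative k x) (at x within S)"
  unfolding has_field_derivative_iff
proof (rule Lim_transform_eventually)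
  show "(k \<longlongrightarrow> k x) (at x within S)"
    using assms by (simp add: continuous_within)
  show "\<forall>\<^sub>F y in at x within S. k y = ((y - x) * k y - (x - x) * k x) / (y - x)"
    by (auto simp: eventually_at_filter)
qed

lemma has_real_derivative_zero_if_dominated:
  fixes f e :: "real \<Rightarrow> real"
  assumes e: "(e has_real_derivative 0) (at x within S)"
    and dom: "\<And>y. \<bar>f y - f x\<bar> \<le> \<bar>e y - e x\<bar>"
  shows "(f has_real_derivative 0) (at x within S)"
  unfolding has_field_derivative_iff
proof (rule Lim_null_comparison)
  show "((\<lambda>y. \<bar>(e y - e x) / (y - x)\<bar>) \<longlongrightarrow> 0) (at x within S)"
    using tendsto_rabs[OF e[unfolded has_field_derivative_iff]] by simp
  show "\<forall>\<^sub>F y in at x within S. norm ((f y - f x) / (y - x)) \<le> \<bar>(e y - e x) / (y - x)\<bar>"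
    using dom by (simp add: abs_divide divide_right_mono)
qed

lemma continuous_within_lipschitz_comp_wH_star:
  assumes C: "continuous (at x within S) C" and Cd: "continuous (at x within S) Cd"
    and Cd_nonneg: "\<And>a. a \<in> S \<Longrightarrow> 0 \<le> Cd a" and "x \<in> S"
    and lip: "L-lipschitz_on {0..} \<psi>"
  shows "continuous (at x within S) (\<lambda>a. \<psi> (wH_star C Cd u a))"
proof (rule continuous_within_compose2[where f = "wH_star C Cd u"])
  show "continuous (at x within S) (wH_star C Cd u)"
    using C Cd unfolding wH_star_def wL_star_def by (intro continuous_intros)
  have "continuous (at (wH_star C Cd u x) within {0..}) \<psi>"
    using lipschitz_on_continuous_on[OF lip] Cd_nonneg[OF \<open>x \<in> S\<close>]
    by (simp add: continuous_on_eq_continuous_within wH_star_def wL_star_def)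
  moreover have "wH_star C Cd u ` S \<subseteq> {0..}"
    using Cd_nonneg by (auto simp: wH_star_def wL_star_def)
  ultimately show "continuous (at (wH_star C Cd u x) within wH_star C Cd u ` S) \<psi>"
    by (rule continuous_within_subset)
qed

lemma lipschitz_comp_wL_star_has_derivative_0:
  assumes C0: "C 0 = 0"
    and dC: "(C has_real_derivative Cd 0) (at 0 within S)"
    and dCd: "(Cd has_real_derivative C2) (at 0 within S)"
    and lip: "1-lipschitz_on {0..} \<psi>"
  shows "((\<lambda>a. \<psi> (wL_star C Cd u a)) has_real_derivative 0) (at 0 within S)"
proof -
  have "((\<lambda>a. C a - a * Cd a) has_real_derivative 0) (at 0 within S)"
    using DERIV_diff[OF dC DERIV_mult[OF DERIV_ident dCd]] by simp
  then show ?thesis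
  proof (rule has_real_derivative_zero_if_dominated)
    fix a
    have "\<bar>\<psi> (wL_star C Cd u a) - \<psi> (wL_star C Cd u 0)\<bar> \<le> \<bar>wL_star C Cd u a - wL_star C Cd u 0\<bar>"
      using lipschitz_onD[OF lip, of "wL_star C Cd u a" "wL_star C Cd u 0"]
      by (simp add: wL_star_def dist_real_def)
    with wL_star_dist_le[of C Cd u a, OF C0] C0
    show "\<bar>\<psi> (wL_star C Cd u a) - \<psi> (wL_star C Cd u 0)\<bar> \<le> \<bar>(C a - a * Cd a) - (C 0 - 0 * Cd 0)\<bar>"
      by simp
  qed
qed

lemma profit_has_right_derivative_0:
  fixes \<beta> \<gamma> :: real and \<eta> C Cd :: "real \<Rightarrow> real"
  defines "\<psi> \<equiv> net_wage_cost \<beta> \<gamma> \<eta>"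
  assumes C0: "C 0 = 0"
    and Cd_nonneg: "\<And>a. a \<in> {0..<1} \<Longrightarrow> 0 \<le> Cd a"
    and dC: "(C has_real_derivative Cd 0) (at 0 within {0..<1})"
    and dCd: "(Cd has_real_derivative C2) (at 0 within {0..<1})"
    and lip: "1-lipschitz_on {0..} \<psi>"
  shows "(profit P yH yL u \<gamma> \<beta> C Cd \<eta> has_real_derivative
           P * yH - P * yL - \<psi> (wH_star C Cd u 0) + \<psi> (wL_star C Cd u 0)) (at_right 0)"
proof -
  let ?S = "{0..<1::real}"
  define wL where "wL = wL_star C Cd u"
  define wH where "wH = wH_star C Cd u"
  have "continuous (at 0 within ?S) (\<lambda>a. \<psi> (wH a))"
    unfolding wH_def
    using continuous_within_lipschitz_comp_wH_star[OF DERIV_continuous[OF dC]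
        DERIV_continuous[OF dCd] Cd_nonneg _ lip]
    by simp
  then have high: "((\<lambda>a. a * \<psi> (wH a)) has_real_derivative \<psi> (wH 0)) (at 0 within ?S)"
    using has_real_derivative_times_diff_ident[of 0] by simp
  have low: "((\<lambda>a. (1 - a) * \<psi> (wL a)) has_real_derivative - \<psi> (wL 0)) (at 0 within ?S)"
    using DERIV_mult[OF DERIV_diff[OF DERIV_const DERIV_ident]
        lipschitz_comp_wL_star_has_derivative_0[OF C0 dC dCd lip]]
    by (simp add: wL_def)
  have linear: "((\<lambda>a. P * yL + a * (P * yH - P * yL)) has_real_derivative P * yH - P * yL)
      (at 0 within ?S)"
    by (auto intro!: derivative_eq_intros)
  have "profit P yH yL u \<gamma> \<beta> C Cd \<eta> =
      (\<lambda>a. P * yL + a * (P * yH - P * yL) - a * \<psi> (wH a) - (1 - a) * \<psi> (wL a))"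
    by (simp add: fun_eq_iff profit_eq_net_wage_cost \<psi>_def wH_def wL_def)
  with DERIV_diff[OF DERIV_diff[OF linear high] low] show ?thesis
    by (simp add: at_within_Ico_at_right wH_def wL_def)
qed

lemma right_derivative_pos_obtains_greater:
  fixes f :: "real \<Rightarrow> real"
  assumes "(f has_real_derivative D) (at_right x)" "0 < D" "x < b"
  obtains y where "x < y" "y < b" "f x < f y"
proof -
  obtain d where "0 < d" and inc: "\<And>h. 0 < h \<Longrightarrow> h < d \<Longrightarrow> f x < f (x + h)"
    using has_real_derivative_pos_inc_right[OF assms(1,2)] by auto
  define h where "h = min d (b - x) / 2"
  have "0 < h" "h < d" "x + h < b"
    using \<open>0 < d\<close> assms(3) by (auto simp: h_def min_def field_simps)
  then show ?thesis
    using inc[of h] by (intro that[of "x + h"]) auto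
qed

lemma right_derivative_pos_imp_maximizer_gt:
  fixes f :: "real \<Rightarrow> real"
  assumes "(f has_real_derivative D) (at_right x)" "0 < D"
    and "a \<in> {x..<b}" "\<forall>y\<in>{x..<b}. f y \<le> f a"
  shows "x < a"
proof (rule ccontr)
  assume "\<not> x < a"
  with assms(3) have "a = x" by simp
  with assms obtain y where "x < y" "y < b" "f a < f y"
    using right_derivative_pos_obtains_greater[of f D x b] by auto
  moreover from \<open>x < y\<close> \<open>y < b\<close> have "y \<in> {x..<b}" by simp
  ultimately show False using assms(4) by fastforce
qed

theorem proposition4:
  fixes P yH yL u \<gamma> \<beta> :: real
    and C Cd C2 \<eta> \<eta>d \<eta>2 :: "real \<Rightarrow> real"
  defines "g \<equiv> profit P yH yL u \<gamma> \<beta> C Cd \<eta>"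
  assumes P: "P > 0" and y: "yH > yL" "yL \<ge> 0"
    and \<gamma>: "0 < \<gamma>" "\<gamma> \<le> 1"
    and C0: "C 0 = 0"
    and Cmono: "mono_on {0..<1} C"
    and Cconv: "strict_convex_on {0..<1} C"
    and Cd: "\<And>a. a \<in> {0..<1} \<Longrightarrow> (C has_real_derivative Cd a) (at a within {0..<1})"
    and C2: "\<And>a. a \<in> {0..<1} \<Longrightarrow> (Cd has_real_derivative C2 a) (at a within {0..<1})"
    and Clim: "filterlim C at_top (at_left 1)"
    and \<eta>0: "\<eta> 0 = 0"
    and \<eta>mono: "mono_on {0..} \<eta>"
    and \<eta>conv: "strict_convex_on {0..} \<eta>"
    and \<eta>d: "\<And>x. x \<in> {0..} \<Longrightarrow> (\<eta> has_real_derivative \<eta>d x) (at x within {0..})"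
    and \<eta>2: "\<And>x. x \<in> {0..} \<Longrightarrow> (\<eta>d has_real_derivative \<eta>2 x) (at x within {0..})"
    and \<beta>: "\<beta> \<ge> 0" "\<gamma> * \<eta>d \<beta> = 1"
  shows "(Cd 0 < P * yH - P * yL \<longrightarrow>
            (\<exists>D. (g has_real_derivative D) (at_right 0) \<and> D > 0) \<and>
            (\<forall>a\<in>{0..<1}. (\<forall>x\<in>{0..<1}. g x \<le> g a) \<longrightarrow> a > 0))
       \<and> (0 \<le> \<beta> \<and> \<beta> \<le> u \<longrightarrow>
            (\<forall>D. (g has_real_derivative D) (at_right 0) \<and> D > 0 \<longrightarrow> Cd 0 < P * yH - P * yL))"
proof -
  define \<psi> where "\<psi> = net_wage_cost \<beta> \<gamma> \<eta>"
  define D0 where "D0 = P * yH - P * yL - \<psi> (wH_star C Cd u 0) + \<psi> (wL_star C Cd u 0)"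
  have Cd_nonneg: "\<And>a. a \<in> {0..<1} \<Longrightarrow> 0 \<le> Cd a"
    using mono_on_has_real_derivative_nonneg[OF Cmono] Cd by blast
  have lip: "1-lipschitz_on {0..} \<psi>"
    unfolding \<psi>_def using \<gamma>(1) \<eta>mono strict_convex_on_imp_convex_on[OF \<eta>conv] \<eta>d[of \<beta>] \<beta>
    by (intro net_wage_cost_lipschitz) auto
  have dg: "(g has_real_derivative D0) (at_right 0)"
    unfolding g_def D0_def \<psi>_def
    using profit_has_right_derivative_0[OF C0 Cd_nonneg Cd C2 lip[unfolded \<psi>_def]] by simp
  have wages_0: "wL_star C Cd u 0 = max 0 u" "wH_star C Cd u 0 = max 0 u + Cd 0"
    using C0 by (simp_all add: wH_star_def wL_star_def)
  have D0_lower: "P * yH - P * yL - Cd 0 \<le> D0"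
    using lipschitz_onD[OF lip, of "max 0 u + Cd 0" "max 0 u"] Cd_nonneg[of 0]
    by (simp add: D0_def wages_0 dist_real_def)
  have D0_eq: "D0 = P * yH - P * yL - Cd 0" if "\<beta> \<le> u"
    using that \<beta>(1) Cd_nonneg[of 0] by (simp add: D0_def wages_0 \<psi>_def net_wage_cost_def)
  have D_eq: "D = D0" if "(g has_real_derivative D) (at_right 0)" for D
    using has_field_derivative_unique[OF that dg] trivial_limit_at_right_real by blast
  show ?thesis
  proof (intro conjI impI)
    assume "Cd 0 < P * yH - P * yL"
    with D0_lower have "0 < D0" by linarith
    with dg show "\<exists>D. (g has_real_derivative D) (at_right 0) \<and> D > 0" by blast
    from \<open>0 < D0\<close> show "\<forall>a\<in>{0..<1}. (\<forall>x\<in>{0..<1}. g x \<le> g a) \<longrightarrow> a > 0"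
      using right_derivative_pos_imp_maximizer_gt[OF dg] by blast
  next
    assume "0 \<le> \<beta> \<and> \<beta> \<le> u"
    with D_eq D0_eq
    show "\<forall>D. (g has_real_derivative D) (at_right 0) \<and> D > 0 \<longrightarrow> Cd 0 < P * yH - P * yL"
      by (metis diff_gt_0_iff_gt)
  qed
qed

end
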